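(* In the Gaussian observation model described in the context, for every $\varepsilon\in(0,1/2)$ there exists an affine estimate $\hat g_\varepsilon(\omega)=\phi^T\omega+c$ such that $$\mathrm{Risk}(\hat g_\varepsilon;\varepsilon)\le\frac{\mathrm{ErfInv}(\varepsilon/2)}{\mathrm{ErfInv}(\varepsilon)}\,\mathrm{Risk}_*(\varepsilon).$$
   Context: Gaussian model: $X\subset\mathbb R^n$ is a nonempty convex compact set, $A$ is an $L\times n$ real matrix, $g\in\mathbb R^n$, and one observes $\omega=Ax+\xi\in\mathbb R^L$ with $\xi\sim\mathcal N(0,I_L)$ and unknown $x\in X$; the goal is to estimate $g^Tx$. An estimate is a Borel function $\hat g:\mathbb R^L\to\mathbb R$; it is affine if $\hat g(\omega)=\phi^T\omega+c$ for some $\phi\in\mathbb R^L$, $c\in\mathbb R$. For $\varepsilon\in(0,1)$, $\mathrm{Risk}(\hat g;\varepsilon)=\inf\{\delta:\sup_{x\in X}\mathrm{Prob}\{|\hat g(Ax+\xi)-g^Tx|>\delta\}<\varepsilon\}$; $\mathrm{Risk}_*(\varepsilon)$ is its infimum over all Borel estimates. $\mathrm{ErfInv}(y)$ denotes the number $t$ with $y=\frac1{\sqrt{2\pi}}\int_t^\infty e^{-s^2/2}ds$. *)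

theory Defs
  imports "HOL-Analysis.Analysis" "HOL-Probability.Probability"
begin

definition gauss_noise :: "(real ^ 'l) measure" where
  "gauss_noise = distr (PiM UNIV (\<lambda>_::'l. density lborel std_normal_density)) borel
                       (\<lambda>f. \<chi> i. f i)"

definition err_prob :: "real ^ 'n ^ 'l \<Rightarrow> real ^ 'n \<Rightarrow> (real ^ 'l \<Rightarrow> real) \<Rightarrow> real ^ 'n \<Rightarrow> real \<Rightarrow> real" where
  "err_prob A g ghat x \<delta> =
     measure gauss_noise {\<xi>. \<bar>ghat (A *v x + \<xi>) - g \<bullet> x\<bar> > \<delta>}"

text \<open>Risk(ghat; eps) = inf { delta : sup_{x in X} Prob{...} < eps } (valued in ereal,
  so that the infimum of the empty set is +infinity).\<close>
definition Risk :: "(real ^ 'n) set \<Rightarrow> real ^ 'n ^ 'l \<Rightarrow> real ^ 'n \<Rightarrow> (real ^ 'l \<Rightarrow> real) \<Rightarrow> real \<Rightarrow> ereal" where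
  "Risk X A g ghat \<epsilon> =
     Inf (ereal ` {\<delta>. (SUP x\<in>X. ereal (err_prob A g ghat x \<delta>)) < ereal \<epsilon>})"

definition Risk_star :: "(real ^ 'n) set \<Rightarrow> real ^ 'n ^ 'l \<Rightarrow> real ^ 'n \<Rightarrow> real \<Rightarrow> ereal" where
  "Risk_star X A g \<epsilon> =
     (INF ghat\<in>(borel_measurable borel :: (real ^ 'l \<Rightarrow> real) set). Risk X A g ghat \<epsilon>)"

definition ErfInv :: "real \<Rightarrow> real" where
  "ErfInv y = (THE t. y = (LBINT s:{t..}. (1 / sqrt (2 * pi)) * exp (- s\<^sup>2 / 2)))"

end

theory Submission
  imports Defs
begin

text \<open>
  Write \<open>Q\<close> for the standard normal upper tail, \<open>q = ErfInv \<epsilon>\<close> and \<open>r = ErfInv (\<epsilon>/2)\<close>, so that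
  \<open>Q(q) = \<epsilon>\<close>, \<open>Q(r) = \<epsilon>/2\<close> and \<open>0 < q < r\<close>.

  Lower bound: by a change of measure (Cameron--Martin for translations) and the Neyman--Pearson
  argument, no test separates \<open>a + \<xi>\<close> from \<open>b + \<xi>\<close> with total error below \<open>2Q(\<parallel>a - b\<parallel>/2)\<close>.
  Thresholding an estimate turns it into such a test, so the minimax risk \<open>m\<close> is at least
  \<open>g\<^sup>T(x - y)/2\<close> whenever \<open>\<parallel>A(x - y)\<parallel> \<le> 2q\<close>; by convexity of \<open>X\<close>, \<open>g\<^sup>T(x - y)/2 \<le> (r/q) m\<close>
  whenever \<open>\<parallel>A(x - y)\<parallel> \<le> 2r\<close>.

  Upper bound: Lagrangian duality (a separating hyperplane) yields \<open>\<phi>\<close> with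
  \<open>(g\<^sup>Td - \<phi>\<^sup>TAd)/2 + r\<parallel>\<phi>\<parallel> \<le> (r/q) m\<close> for all differences \<open>d\<close> of points of \<open>X\<close>; centering the
  bias over the compact \<open>X\<close> gives \<open>c\<close>, and since \<open>|\<phi>\<^sup>T\<xi>| > r\<parallel>\<phi>\<parallel>\<close> has probability \<open>2Q(r) = \<epsilon>\<close>,
  the estimate \<open>\<phi>\<^sup>T\<omega> + c\<close> has \<open>\<epsilon>\<close>-risk at most \<open>(r/q) m\<close>.
\<close>

section \<open>The standard normal law and its upper tail\<close>

definition std_normal :: "real measure" where
  "std_normal = density lborel std_normal_density"

definition normal_tail :: "real \<Rightarrow> real" where
  "normal_tail t = measure std_normal {t..}"

lemma real_distribution_std_normal: "real_distribution std_normal"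
  unfolding real_distribution_def real_distribution_axioms_def std_normal_def
  using prob_space_normal_density by auto

interpretation std_normal: real_distribution std_normal
  by (rule real_distribution_std_normal)

lemma emeasure_std_normal:
  "A \<in> sets borel \<Longrightarrow>
     emeasure std_normal A = (\<integral>\<^sup>+ x. ennreal (std_normal_density x) * indicator A x \<partial>lborel)"
  unfolding std_normal_def by (subst emeasure_density) auto

text \<open>Points are null sets, so open and closed rays have the same measure.\<close>
lemma std_normal_insert:
  assumes "S \<in> sets borel" "t \<notin> S"
  shows "measure std_normal (insert t S) = measure std_normal S"
proof -
  have "emeasure std_normal {t} = (\<integral>\<^sup>+ y. ennreal (std_normal_density y) * indicator {t} y \<partial>lborel)"
    by (rule emeasure_std_normal) simp
  also have "\<dots> = 0" by (rule nn_integral_null_set) auto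
  finally have "measure std_normal {t} = 0" by (simp add: measure_def)
  moreover have "measure std_normal ({t} \<union> S) = measure std_normal {t} + measure std_normal S"
    using assms by (intro std_normal.finite_measure_Union) auto
  ultimately show ?thesis by simp
qed

lemma normal_tail_open: "measure std_normal {t<..} = normal_tail t"
proof -
  have "{t..} = insert t {t<..}" by auto
  then show ?thesis using std_normal_insert[of "{t<..}" t] by (simp add: normal_tail_def)
qed

text \<open>Relating \<open>Q\<close> to the distribution function gives its continuity and limits.\<close>
lemma normal_tail_cdf: "normal_tail t = 1 - cdf std_normal t"
proof -
  have "{..t} = insert t {..<t}" "UNIV - {t..} = {..<t}" by auto
  then show ?thesis
    using std_normal.prob_compl[of "{t..}"] std_normal_insert[of "{..<t}" t]
    by (simp add: normal_tail_def cdf_def)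
qed

lemma normal_tail_reflect: "measure std_normal {..<-t} = normal_tail t"
proof -
  have "emeasure std_normal {..-t}
      = (\<integral>\<^sup>+ x. ennreal (std_normal_density x) * indicator {..-t} x \<partial>lborel)"
    by (rule emeasure_std_normal) simp
  also have "\<dots> = ennreal \<bar>-1\<bar> * (\<integral>\<^sup>+ x. ennreal (std_normal_density (0 + -1 * x))
                      * indicator {..-t} (0 + -1 * x) \<partial>lborel)"
    by (rule nn_integral_real_affine) auto
  also have "\<dots> = (\<integral>\<^sup>+ x. ennreal (std_normal_density x) * indicator {t..} x \<partial>lborel)"
    by (auto intro!: nn_integral_cong simp: std_normal_density_def split: split_indicator)
  also have "\<dots> = emeasure std_normal {t..}"
    by (rule emeasure_std_normal[symmetric]) simp
  finally have "measure std_normal {..-t} = normal_tail t"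
    by (simp add: normal_tail_def measure_def)
  moreover have "{..-t} = insert (-t) {..<-t}" by auto
  ultimately show ?thesis using std_normal_insert[of "{..<-t}" "-t"] by simp
qed

lemma normal_tail_0: "normal_tail 0 = 1/2"
  using std_normal.prob_compl[of "{0..}"] normal_tail_reflect[of 0]
  by (simp add: normal_tail_def Compl_eq_Diff_UNIV[symmetric] Compl_atLeast)

lemma normal_tail_continuous: "isCont normal_tail t"
proof -
  have "isCont (cdf std_normal) t"
    using std_normal.isCont_cdf std_normal_insert[of "{}" t] by simp
  then show ?thesis unfolding normal_tail_cdf[abs_def] by (intro continuous_intros)
qed

lemma normal_tail_at_top: "(normal_tail \<longlongrightarrow> 0) at_top"
  using tendsto_diff[OF tendsto_const std_normal.cdf_lim_at_top_prob, of 1]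
  unfolding normal_tail_cdf[abs_def] by simp

lemma normal_tail_at_bot: "(normal_tail \<longlongrightarrow> 1) at_bot"
  using tendsto_diff[OF tendsto_const std_normal.cdf_lim_at_bot, of 1]
  unfolding normal_tail_cdf[abs_def] by simp

text \<open>The tail is strictly decreasing: the density is bounded below on every bounded interval.\<close>
lemma normal_tail_strict_mono:
  assumes "s < t"
  shows "normal_tail t < normal_tail s"
proof -
  define c where "c = std_normal_density (\<bar>s\<bar> + \<bar>t\<bar>)"
  have c: "0 < c" unfolding c_def by (simp add: normal_density_pos)
  have lower: "c \<le> std_normal_density x" if "x \<in> {s..<t}" for x
  proof -
    have "x\<^sup>2 \<le> (\<bar>s\<bar> + \<bar>t\<bar>)\<^sup>2" using that by (intro abs_le_square_iff[THEN iffD1]) auto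
    then show ?thesis unfolding c_def std_normal_density_def by (intro mult_left_mono) simp_all
  qed
  have "ennreal (c * (t - s)) = (\<integral>\<^sup>+ x. ennreal c * indicator {s..<t} x \<partial>lborel)"
    using assms c by (simp add: nn_integral_cmult_indicator ennreal_mult)
  also have "\<dots> \<le> (\<integral>\<^sup>+ x. ennreal (std_normal_density x) * indicator {s..<t} x \<partial>lborel)"
    using lower by (intro nn_integral_mono) (auto simp: indicator_def)
  also have "\<dots> = emeasure std_normal {s..<t}" by (rule emeasure_std_normal[symmetric]) simp
  finally have "c * (t - s) \<le> measure std_normal {s..<t}"
    using c assms by (simp add: std_normal.emeasure_eq_measure)
  moreover have "0 < c * (t - s)" using c assms by simp
  ultimately have pos: "0 < measure std_normal {s..<t}" by linarith
  have "{s..} = {s..<t} \<union> {t..}" using assms by auto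
  then have "normal_tail s = measure std_normal ({s..<t} \<union> {t..})" by (simp add: normal_tail_def)
  also have "\<dots> = measure std_normal {s..<t} + normal_tail t"
    unfolding normal_tail_def by (rule std_normal.finite_measure_Union) auto
  finally show ?thesis using pos by simp
qed

lemma normal_tail_mono: "s \<le> t \<Longrightarrow> normal_tail t \<le> normal_tail s"
  using normal_tail_strict_mono[of s t] by (cases "s = t") auto

lemma normal_tail_LBINT:
  "normal_tail t = (LBINT s:{t..}. (1 / sqrt (2 * pi)) * exp (- s\<^sup>2 / 2))"
proof -
  have int: "integrable lborel (\<lambda>x. indicator {t..} x * std_normal_density x)"
    using integrable_mult_indicator[of "{t..}" lborel std_normal_density] by simp
  have "emeasure std_normal {t..}
      = (\<integral>\<^sup>+ x. ennreal (indicator {t..} x * std_normal_density x) \<partial>lborel)"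
    by (subst emeasure_std_normal) (auto intro!: nn_integral_cong simp: indicator_def)
  also have "\<dots> = ennreal (\<integral> x. indicator {t..} x * std_normal_density x \<partial>lborel)"
    using int by (intro nn_integral_eq_integral) auto
  finally have "normal_tail t = (\<integral> x. indicator {t..} x * std_normal_density x \<partial>lborel)"
    by (simp add: normal_tail_def measure_def integral_nonneg_AE)
  then show ?thesis by (simp add: set_lebesgue_integral_def std_normal_density_def)
qed

text \<open>By continuity and the limits at infinity, the tail takes every value in \<open>(0,1)\<close>; being
  strictly decreasing, it is inverted by \<open>ErfInv\<close>.\<close>
lemma normal_tail_ErfInv:
  assumes "0 < y" "y < 1"
  shows "normal_tail (ErfInv y) = y"
proof -
  obtain a where a: "y < normal_tail a"
    using order_tendstoD(1)[OF normal_tail_at_bot assms(2)] by (auto simp: eventually_at_bot_linorder)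
  obtain b where b: "a \<le> b" "normal_tail b < y"
    using order_tendstoD(2)[OF normal_tail_at_top assms(1)]
    by (auto simp: eventually_at_top_linorder intro: max.cobounded1 max.cobounded2)
  have "continuous_on {a..b} normal_tail"
    using normal_tail_continuous by (simp add: continuous_at_imp_continuous_on)
  then obtain t where t: "normal_tail t = y"
    using IVT2'[of normal_tail b y a] a b by auto
  have "ErfInv y = t" unfolding ErfInv_def
  proof (rule the_equality)
    show "y = (LBINT s:{t..}. 1 / sqrt (2 * pi) * exp (- s\<^sup>2 / 2))"
      using t normal_tail_LBINT by simp
    fix t' assume "y = (LBINT s:{t'..}. 1 / sqrt (2 * pi) * exp (- s\<^sup>2 / 2))"
    then have "normal_tail t' = normal_tail t" using t normal_tail_LBINT by simp
    then show "t' = t" using normal_tail_strict_mono by (metis linorder_neqE_linordered_idom less_irrefl)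
  qed
  then show ?thesis using t by simp
qed

section \<open>The Gaussian noise vector\<close>

definition iid_std_normal :: "('l::finite \<Rightarrow> real) measure" where
  "iid_std_normal = PiM UNIV (\<lambda>_. std_normal)"

lemma prob_space_iid_std_normal: "prob_space (iid_std_normal :: ('l::finite \<Rightarrow> real) measure)"
  unfolding iid_std_normal_def by (intro prob_space_PiM std_normal.prob_space_axioms)

lemma sets_iid_std_normal [measurable_cong]:
  "sets (iid_std_normal :: ('l::finite \<Rightarrow> real) measure) = sets (PiM UNIV (\<lambda>_. borel))"
  unfolding iid_std_normal_def by (intro sets_PiM_cong) auto

lemma space_iid_std_normal [simp]: "space (iid_std_normal :: ('l::finite \<Rightarrow> real) measure) = UNIV"
  unfolding iid_std_normal_def by (simp add: space_PiM)

lemma vec_lambda_measurable [measurable]: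
  "vec_lambda \<in> borel_measurable (PiM (UNIV :: 'l::finite set) (\<lambda>_. borel :: real measure))"
proof -
  have "(\<lambda>f. (\<chi> i. f i) \<bullet> b) \<in> borel_measurable (PiM (UNIV :: 'l set) (\<lambda>_. borel :: real measure))"
    if "b \<in> Basis" for b :: "real ^ 'l"
  proof -
    from that obtain j where b: "b = axis j 1" by (auto simp: Basis_vec_def)
    have "(\<lambda>f. f j) \<in> borel_measurable (PiM (UNIV :: 'l set) (\<lambda>_. borel :: real measure))"
      by measurable
    then show ?thesis by (simp add: b inner_axis)
  qed
  then show ?thesis using borel_measurable_euclidean_space[of vec_lambda] by auto
qed

lemma coord_shift_measurable:
  "(\<lambda>f i. f i + c i) \<in> measurable (iid_std_normal :: ('l::finite \<Rightarrow> real) measure) (PiM UNIV (\<lambda>_. borel))"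
proof (rule measurable_PiM_single')
  show "(\<lambda>f. f i + c i) \<in> borel_measurable (iid_std_normal :: ('l \<Rightarrow> real) measure)" for i
    by measurable
qed auto

lemma gauss_noise_iid: "gauss_noise = distr (iid_std_normal :: ('l::finite \<Rightarrow> real) measure) borel vec_lambda"
  unfolding gauss_noise_def iid_std_normal_def std_normal_def ..

lemma prob_space_gauss_noise: "prob_space (gauss_noise :: (real ^ 'l::finite) measure)"
  unfolding gauss_noise_iid
  by (intro prob_space.prob_space_distr prob_space_iid_std_normal) measurable

lemma sets_gauss_noise [simp, measurable_cong]:
  "sets (gauss_noise :: (real ^ 'l::finite) measure) = sets borel"
  unfolding gauss_noise_iid by simp

lemma space_gauss_noise [simp]: "space (gauss_noise :: (real ^ 'l::finite) measure) = UNIV"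
  unfolding gauss_noise_iid by simp

lemma measure_gauss_noise:
  "S \<in> sets borel \<Longrightarrow>
     measure (gauss_noise :: (real ^ 'l::finite) measure) S
       = measure (iid_std_normal :: ('l \<Rightarrow> real) measure) {f. vec_lambda f \<in> S}"
  unfolding gauss_noise_iid by (subst measure_distr) (auto simp: vimage_def)

lemma iid_std_normal_coordinate:
  "distr (iid_std_normal :: ('l::finite \<Rightarrow> real) measure) borel (\<lambda>f. f i) = std_normal"
proof -
  have "distr iid_std_normal borel (\<lambda>f. f i) = distr iid_std_normal std_normal (\<lambda>f. f i)"
    by (rule distr_cong) auto
  also have "\<dots> = std_normal" unfolding iid_std_normal_def
    by (rule distr_PiM_component) (auto intro: std_normal.prob_space_axioms)
  finally show ?thesis .
qed

lemma iid_std_normal_indep: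
  "prob_space.indep_vars (iid_std_normal :: ('l::finite \<Rightarrow> real) measure)
     (\<lambda>_. borel) (\<lambda>i f. f i) UNIV"
proof -
  interpret prob_space "iid_std_normal :: ('l \<Rightarrow> real) measure" by (rule prob_space_iid_std_normal)
  have "distr iid_std_normal (PiM UNIV (\<lambda>_. borel)) (\<lambda>f. \<lambda>i\<in>UNIV. f i)
      = distr iid_std_normal (PiM UNIV (\<lambda>_. borel)) (\<lambda>f. f)"
    by (rule distr_cong) auto
  also have "\<dots> = iid_std_normal" by (rule distr_id2) (simp add: sets_iid_std_normal)
  also have "\<dots> = PiM UNIV (\<lambda>i. distr (iid_std_normal :: ('l \<Rightarrow> real) measure) borel (\<lambda>f. f i))"
    by (simp only: iid_std_normal_coordinate) (simp add: iid_std_normal_def)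
  finally show ?thesis by (subst indep_vars_iff_distr_eq_PiM) auto
qed

lemma iid_std_normal_linear_form:
  fixes u :: "real ^ 'l::finite"
  assumes "u \<noteq> 0"
  shows "distributed (iid_std_normal :: ('l \<Rightarrow> real) measure) lborel (\<lambda>f. u \<bullet> vec_lambda f)
           (normal_density 0 (norm u))"
proof -
  interpret prob_space "iid_std_normal :: ('l \<Rightarrow> real) measure" by (rule prob_space_iid_std_normal)
  define I where "I = {i. u $ i \<noteq> 0}"
  have I: "finite I" "I \<noteq> {}" using assms by (auto simp: I_def vec_eq_iff)
  have coord: "distributed iid_std_normal lborel (\<lambda>f. f i) std_normal_density" for i :: 'l
    using iid_std_normal_coordinate[of i]
    by (auto simp: distributed_def std_normal_def distr_cong[of iid_std_normal iid_std_normal lborel borel])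
  have ind: "indep_vars (\<lambda>_. borel) (\<lambda>i f. u $ i * f i) I"
    using indep_vars_compose2[OF indep_vars_subset[OF iid_std_normal_indep, of I],
        of "\<lambda>i x. u $ i * x" "\<lambda>_. borel"]
    by auto
  have "distributed iid_std_normal lborel (\<lambda>f. u $ i * f i) (normal_density 0 \<bar>u $ i\<bar>)"
    if "i \<in> I" for i
    using normal_density_affine[OF coord[of i], of "u $ i" 0] that by (simp add: I_def)
  then have "distributed iid_std_normal lborel (\<lambda>f. \<Sum>i\<in>I. u $ i * f i)
               (normal_density (\<Sum>i\<in>I. 0) (sqrt (\<Sum>i\<in>I. \<bar>u $ i\<bar>\<^sup>2)))"
    by (intro sum_indep_normal[OF I ind]) (auto simp: I_def)
  moreover have "(\<lambda>f. \<Sum>i\<in>I. u $ i * f i) = (\<lambda>f. u \<bullet> vec_lambda f)"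
    by (auto simp: inner_vec_def I_def intro!: sum.mono_neutral_left)
  moreover have "sqrt (\<Sum>i\<in>I. \<bar>u $ i\<bar>\<^sup>2) = norm u"
    by (auto simp: norm_vec_def L2_set_def I_def intro!: arg_cong[where f=sqrt] sum.mono_neutral_left)
  ultimately show ?thesis by simp
qed

lemma gauss_noise_linear_tail:
  fixes u :: "real ^ 'l::finite"
  assumes "u \<noteq> 0"
  shows "measure gauss_noise {\<xi>. u \<bullet> \<xi> > s} = normal_tail (s / norm u)"
    and "measure gauss_noise {\<xi>. u \<bullet> \<xi> \<ge> s} = normal_tail (s / norm u)"
    and "measure gauss_noise {\<xi>. u \<bullet> \<xi> < - s} = normal_tail (s / norm u)"
proof -
  interpret prob_space "iid_std_normal :: ('l \<Rightarrow> real) measure" by (rule prob_space_iid_std_normal)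
  have nu: "0 < norm u" using assms by simp
  define Z where "Z = (\<lambda>f. u \<bullet> vec_lambda f / norm u)"
  have "distributed iid_std_normal lborel Z std_normal_density"
    using normal_standard_normal_convert[OF nu, of "\<lambda>f. u \<bullet> vec_lambda f" 0]
      iid_std_normal_linear_form[OF assms] by (simp add: Z_def)
  then have Z: "measure iid_std_normal {f. Z f \<in> B} = measure std_normal B" if "B \<in> sets borel" for B
    using distributed_emeasure[of iid_std_normal lborel Z std_normal_density B] that
    by (simp add: emeasure_std_normal vimage_def measure_def)
  have "measure gauss_noise {\<xi>. u \<bullet> \<xi> > s} = measure iid_std_normal {f. Z f \<in> {s / norm u <..}}"
    using nu by (subst measure_gauss_noise) (auto simp: Z_def divide_less_cancel)
  then show "measure gauss_noise {\<xi>. u \<bullet> \<xi> > s} = normal_tail (s / norm u)"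
    using Z[of "{s / norm u <..}"] by (simp add: normal_tail_open)
  have "measure gauss_noise {\<xi>. u \<bullet> \<xi> \<ge> s} = measure iid_std_normal {f. Z f \<in> {s / norm u ..}}"
    using nu by (subst measure_gauss_noise) (auto simp: Z_def divide_le_cancel)
  then show "measure gauss_noise {\<xi>. u \<bullet> \<xi> \<ge> s} = normal_tail (s / norm u)"
    using Z[of "{s / norm u ..}"] by (simp add: normal_tail_def)
  have "measure gauss_noise {\<xi>. u \<bullet> \<xi> < - s} = measure iid_std_normal {f. Z f \<in> {..< - (s / norm u)}}"
    using nu by (subst measure_gauss_noise) (auto simp: Z_def field_simps)
  then show "measure gauss_noise {\<xi>. u \<bullet> \<xi> < - s} = normal_tail (s / norm u)"
    using Z[of "{..< - (s / norm u)}"] by (simp add: normal_tail_reflect)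
qed

section \<open>Change of measure for translated noise\<close>

text \<open>Densities of \<open>N(c,1)\<close> w.r.t. \<open>N(0,1)\<close> and of \<open>N(a,I)\<close> w.r.t. \<open>N(0,I)\<close>.\<close>
definition likelihood_ratio1 :: "real \<Rightarrow> real \<Rightarrow> real" where
  "likelihood_ratio1 c x = exp (c * x - c\<^sup>2 / 2)"

definition likelihood_ratio :: "real ^ 'l \<Rightarrow> real ^ 'l \<Rightarrow> real" where
  "likelihood_ratio a w = exp (a \<bullet> w - (norm a)\<^sup>2 / 2)"

lemma likelihood_ratio1_measurable [measurable]: "likelihood_ratio1 c \<in> borel_measurable borel"
  unfolding likelihood_ratio1_def by measurable

lemma likelihood_ratio_continuous: "continuous_on UNIV (likelihood_ratio a)"
  unfolding likelihood_ratio_def[abs_def] by (intro continuous_intros)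

lemma likelihood_ratio_measurable [measurable]: "likelihood_ratio a \<in> borel_measurable borel"
  using likelihood_ratio_continuous by (rule borel_measurable_continuous_onI)

lemma std_normal_translate:
  assumes A [measurable]: "A \<in> sets borel"
  shows "emeasure std_normal {x. x + c \<in> A} = emeasure (density lborel (normal_density c 1)) A"
proof -
  have f: "(\<lambda>x. ennreal (normal_density c 1 x) * indicator A x) \<in> borel_measurable borel"
    by measurable
  have "emeasure std_normal {x. x + c \<in> A}
      = (\<integral>\<^sup>+ x. ennreal (std_normal_density x) * indicator {x. x + c \<in> A} x \<partial>lborel)"
    by (intro emeasure_std_normal) measurable
  also have "\<dots> = (\<integral>\<^sup>+ x. ennreal (normal_density c 1 (c + 1 * x)) * indicator A (c + 1 * x) \<partial>lborel)"
    by (intro nn_integral_cong) (simp add: normal_density_def indicator_def add.commute)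
  also have "\<dots> = (\<integral>\<^sup>+ x. ennreal (normal_density c 1 x) * indicator A x \<partial>lborel)"
    using nn_integral_real_affine[OF f, of 1 c] by simp
  also have "\<dots> = emeasure (density lborel (normal_density c 1)) A"
    using A by (subst emeasure_density) auto
  finally show ?thesis .
qed

lemma std_normal_tilt:
  assumes A [measurable]: "A \<in> sets borel"
  shows "(\<integral>\<^sup>+ x. ennreal (likelihood_ratio1 c x) * indicator A x \<partial>std_normal)
       = emeasure (density lborel (normal_density c 1)) A"
proof -
  have "(\<integral>\<^sup>+ x. ennreal (likelihood_ratio1 c x) * indicator A x \<partial>std_normal)
      = (\<integral>\<^sup>+ x. ennreal (std_normal_density x) * (ennreal (likelihood_ratio1 c x) * indicator A x) \<partial>lborel)"
    unfolding std_normal_def by (intro nn_integral_density) measurable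
  also have "\<dots> = (\<integral>\<^sup>+ x. ennreal (normal_density c 1 x) * indicator A x \<partial>lborel)"
  proof (intro nn_integral_cong)
    fix x :: real
    have "std_normal_density x * likelihood_ratio1 c x = normal_density c 1 x"
      unfolding likelihood_ratio1_def normal_density_def
      by (simp add: mult_exp_exp power2_diff algebra_simps)
    then show "ennreal (std_normal_density x) * (ennreal (likelihood_ratio1 c x) * indicator A x)
             = ennreal (normal_density c 1 x) * indicator A x"
      by (simp add: mult.assoc[symmetric] ennreal_mult[symmetric] likelihood_ratio1_def)
  qed
  also have "\<dots> = emeasure (density lborel (normal_density c 1)) A"
    using A by (subst emeasure_density) auto
  finally show ?thesis .
qed

lemma iid_std_normal_translate:
  fixes c :: "'l::finite \<Rightarrow> real"
  shows "distr iid_std_normal (PiM UNIV (\<lambda>_. borel)) (\<lambda>f i. f i + c i)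
       = PiM UNIV (\<lambda>i. density lborel (normal_density (c i) 1))"
proof -
  interpret product_sigma_finite "\<lambda>i. density lborel (normal_density (c i) 1)"
    by (auto simp: product_sigma_finite_def intro!: prob_space_imp_sigma_finite prob_space_normal_density)
  interpret iid: product_sigma_finite "\<lambda>_::'l. std_normal"
    by (auto simp: product_sigma_finite_def intro!: prob_space_imp_sigma_finite std_normal.prob_space_axioms)
  show ?thesis
  proof (rule PiM_eqI)
    fix A assume A: "\<And>i. i \<in> (UNIV :: 'l set) \<Longrightarrow> A i \<in> sets (density lborel (normal_density (c i) 1))"
    then have A': "A i \<in> sets borel" for i by auto
    have PA: "Pi\<^sub>E UNIV A \<in> sets (PiM UNIV (\<lambda>_. borel :: real measure))"
      using A' by (intro sets_PiM_I_finite) auto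
    have "emeasure (distr iid_std_normal (PiM UNIV (\<lambda>_. borel)) (\<lambda>f i. f i + c i)) (Pi\<^sub>E UNIV A)
        = emeasure iid_std_normal ((\<lambda>f i. f i + c i) -` Pi\<^sub>E UNIV A \<inter> space iid_std_normal)"
      by (rule emeasure_distr[OF coord_shift_measurable PA])
    also have "(\<lambda>f i. f i + c i) -` Pi\<^sub>E UNIV A \<inter> space iid_std_normal
        = Pi\<^sub>E UNIV (\<lambda>i. {x. x + c i \<in> A i})"
      by (auto simp: PiE_iff)
    also have "emeasure iid_std_normal \<dots> = (\<Prod>i\<in>UNIV. emeasure std_normal {x. x + c i \<in> A i})"
      unfolding iid_std_normal_def using A' by (intro iid.emeasure_PiM) auto
    finally show "emeasure (distr iid_std_normal (PiM UNIV (\<lambda>_. borel)) (\<lambda>f i. f i + c i)) (Pi\<^sub>E UNIV A)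
        = (\<Prod>i\<in>UNIV. emeasure (density lborel (normal_density (c i) 1)) (A i))"
      using A' by (simp add: std_normal_translate)
  qed (auto intro!: sets_PiM_cong)
qed

lemma iid_std_normal_tilt:
  fixes c :: "'l::finite \<Rightarrow> real"
  shows "density iid_std_normal (\<lambda>f. \<Prod>i\<in>UNIV. ennreal (likelihood_ratio1 (c i) (f i)))
       = PiM UNIV (\<lambda>i. density lborel (normal_density (c i) 1))"
proof -
  interpret product_sigma_finite "\<lambda>i. density lborel (normal_density (c i) 1)"
    by (auto simp: product_sigma_finite_def intro!: prob_space_imp_sigma_finite prob_space_normal_density)
  interpret iid: product_sigma_finite "\<lambda>_::'l. std_normal"
    by (auto simp: product_sigma_finite_def intro!: prob_space_imp_sigma_finite std_normal.prob_space_axioms)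
  show ?thesis
  proof (rule PiM_eqI)
    fix A assume A: "\<And>i. i \<in> (UNIV :: 'l set) \<Longrightarrow> A i \<in> sets (density lborel (normal_density (c i) 1))"
    then have A': "A i \<in> sets borel" for i by auto
    have PA: "Pi\<^sub>E UNIV A \<in> sets (iid_std_normal :: ('l \<Rightarrow> real) measure)"
      using A' unfolding sets_iid_std_normal by (intro sets_PiM_I_finite) auto
    have "emeasure (density iid_std_normal (\<lambda>f. \<Prod>i\<in>UNIV. ennreal (likelihood_ratio1 (c i) (f i)))) (Pi\<^sub>E UNIV A)
        = (\<integral>\<^sup>+ f. (\<Prod>i\<in>UNIV. ennreal (likelihood_ratio1 (c i) (f i))) * indicator (Pi\<^sub>E UNIV A) f \<partial>iid_std_normal)"
      using PA by (subst emeasure_density) auto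
    also have "\<dots> = (\<integral>\<^sup>+ f. (\<Prod>i\<in>UNIV. ennreal (likelihood_ratio1 (c i) (f i)) * indicator (A i) (f i)) \<partial>iid_std_normal)"
      by (intro nn_integral_cong) (auto simp: prod.distrib indicator_def PiE_iff)
    also have "\<dots> = (\<Prod>i\<in>UNIV. (\<integral>\<^sup>+ x. ennreal (likelihood_ratio1 (c i) x) * indicator (A i) x \<partial>std_normal))"
      unfolding iid_std_normal_def using A' by (intro iid.product_nn_integral_prod) auto
    finally show "emeasure (density iid_std_normal (\<lambda>f. \<Prod>i\<in>UNIV. ennreal (likelihood_ratio1 (c i) (f i)))) (Pi\<^sub>E UNIV A)
        = (\<Prod>i\<in>UNIV. emeasure (density lborel (normal_density (c i) 1)) (A i))"
      using A' by (simp add: std_normal_tilt)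
  qed (auto simp: sets_iid_std_normal intro!: sets_PiM_cong)
qed

lemma prod_likelihood_ratio1:
  fixes a :: "real ^ 'l::finite"
  shows "(\<Prod>i\<in>UNIV. ennreal (likelihood_ratio1 (a $ i) (f i))) = ennreal (likelihood_ratio a (vec_lambda f))"
proof -
  have "(norm a)\<^sup>2 = (\<Sum>i\<in>UNIV. (a $ i)\<^sup>2)"
    unfolding power2_norm_eq_inner by (simp add: inner_vec_def power2_eq_square)
  then have "(\<Sum>i\<in>UNIV. a $ i * f i - (a $ i)\<^sup>2 / 2) = a \<bullet> vec_lambda f - (norm a)\<^sup>2 / 2"
    by (simp add: sum_subtractf sum_divide_distrib inner_vec_def)
  then show ?thesis
    by (simp add: prod_ennreal likelihood_ratio1_def likelihood_ratio_def exp_sum[symmetric])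
qed

lemma gauss_noise_translate:
  fixes a :: "real ^ 'l::finite"
  assumes S: "S \<in> sets borel"
  shows "emeasure gauss_noise {\<xi>. a + \<xi> \<in> S}
       = (\<integral>\<^sup>+ f. indicator S (vec_lambda f) * ennreal (likelihood_ratio a (vec_lambda f)) \<partial>iid_std_normal)"
proof -
  have Sm: "{g. vec_lambda g \<in> S} \<in> sets (PiM UNIV (\<lambda>_. borel :: real measure))"
    using measurable_sets[OF vec_lambda_measurable S] by (simp add: vimage_def space_PiM)
  have "vec_lambda (\<lambda>i. f i + a $ i) = a + vec_lambda f" for f :: "'l \<Rightarrow> real"
    by (simp add: vec_eq_iff)
  then have "{f. a + vec_lambda f \<in> S}
      = (\<lambda>f i. f i + a $ i) -` {g. vec_lambda g \<in> S} \<inter> space iid_std_normal"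
    by auto
  moreover have "emeasure gauss_noise {\<xi>. a + \<xi> \<in> S} = emeasure iid_std_normal {f. a + vec_lambda f \<in> S}"
    unfolding gauss_noise_iid using S by (subst emeasure_distr) (auto simp: vimage_def)
  ultimately have "emeasure gauss_noise {\<xi>. a + \<xi> \<in> S}
      = emeasure (distr iid_std_normal (PiM UNIV (\<lambda>_. borel)) (\<lambda>f i. f i + a $ i)) {g. vec_lambda g \<in> S}"
    by (simp only: emeasure_distr[OF coord_shift_measurable Sm])
  also have "\<dots> = emeasure (density iid_std_normal (\<lambda>f. \<Prod>i\<in>UNIV. ennreal (likelihood_ratio1 (a $ i) (f i))))
                   {g. vec_lambda g \<in> S}"
    by (simp add: iid_std_normal_translate iid_std_normal_tilt)
  also have "\<dots> = (\<integral>\<^sup>+ f. indicator S (vec_lambda f) * ennreal (likelihood_ratio a (vec_lambda f)) \<partial>iid_std_normal)"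
    using Sm by (subst emeasure_density)
      (auto intro!: nn_integral_cong simp: prod_likelihood_ratio1 indicator_def)
  finally show ?thesis .
qed

section \<open>Two-point lower bound\<close>

lemma gauss_noise_translate_measure:
  fixes a :: "real ^ 'l::finite"
  assumes "S \<in> sets borel"
  shows "ennreal (measure gauss_noise {\<xi>. a + \<xi> \<in> S})
       = (\<integral>\<^sup>+ f. indicator S (vec_lambda f) * ennreal (likelihood_ratio a (vec_lambda f)) \<partial>iid_std_normal)"
proof -
  interpret prob_space "gauss_noise :: (real ^ 'l) measure" by (rule prob_space_gauss_noise)
  show ?thesis using gauss_noise_translate[OF assms, of a] by (simp add: emeasure_eq_measure)
qed

lemma likelihood_ratio_test_optimal:
  fixes a b :: "real ^ 'l::finite"
  assumes S: "S \<in> sets borel"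
  defines "H \<equiv> {w. likelihood_ratio a w \<le> likelihood_ratio b w}"
  shows "measure gauss_noise {\<xi>. a + \<xi> \<in> H} + measure gauss_noise {\<xi>. b + \<xi> \<notin> H}
       \<le> measure gauss_noise {\<xi>. a + \<xi> \<in> S} + measure gauss_noise {\<xi>. b + \<xi> \<notin> S}"
proof -
  define err :: "(real ^ 'l) set \<Rightarrow> ('l \<Rightarrow> real) \<Rightarrow> ennreal" where
    "err T f = indicator T (vec_lambda f) * ennreal (likelihood_ratio a (vec_lambda f))
             + indicator (- T) (vec_lambda f) * ennreal (likelihood_ratio b (vec_lambda f))" for T f
  have H: "H \<in> sets borel"
    unfolding H_def by (intro borel_closed closed_Collect_le likelihood_ratio_continuous)
  have total: "ennreal (measure gauss_noise {\<xi>. a + \<xi> \<in> T} + measure gauss_noise {\<xi>. b + \<xi> \<notin> T})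
      = (\<integral>\<^sup>+ f. err T f \<partial>iid_std_normal)" if T [measurable]: "T \<in> sets borel" for T
  proof -
    have "{\<xi>. b + \<xi> \<notin> T} = {\<xi>. b + \<xi> \<in> - T}" by simp
    then show ?thesis
      unfolding err_def using gauss_noise_translate_measure[OF T, of a]
        gauss_noise_translate_measure[OF borel_comp[OF T], of b]
      by (subst nn_integral_add) (auto simp: ennreal_plus)
  qed
  have "(\<integral>\<^sup>+ f. err H f \<partial>iid_std_normal) \<le> (\<integral>\<^sup>+ f. err S f \<partial>iid_std_normal)"
    unfolding err_def H_def
    by (intro nn_integral_mono) (auto simp: indicator_def intro: ennreal_leI)
  moreover have "0 \<le> measure gauss_noise {\<xi>. a + \<xi> \<in> S} + measure gauss_noise {\<xi>. b + \<xi> \<notin> S}"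
    by simp
  ultimately show ?thesis using total[OF S] total[OF H] by (metis ennreal_le_iff)
qed

lemma likelihood_ratio_le_iff:
  "likelihood_ratio a w \<le> likelihood_ratio b w \<longleftrightarrow> ((norm b)\<^sup>2 - (norm a)\<^sup>2) / 2 \<le> (b - a) \<bullet> w"
  unfolding likelihood_ratio_def by (auto simp: inner_diff_left)

lemma two_point_lower_bound:
  fixes a b :: "real ^ 'l::finite"
  assumes S: "S \<in> sets borel"
  shows "2 * normal_tail (norm (a - b) / 2)
       \<le> measure gauss_noise {\<xi>. a + \<xi> \<in> S} + measure gauss_noise {\<xi>. b + \<xi> \<notin> S}"
proof (cases "a = b")
  case True
  interpret prob_space "gauss_noise :: (real ^ 'l) measure" by (rule prob_space_gauss_noise)
  have "{\<xi>. b + \<xi> \<in> S} \<in> events" using S by measurable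
  then have "measure gauss_noise {\<xi>. b + \<xi> \<notin> S} = 1 - measure gauss_noise {\<xi>. b + \<xi> \<in> S}"
    using prob_compl[of "{\<xi>. b + \<xi> \<in> S}"] by (simp add: set_diff_eq)
  then show ?thesis using True normal_tail_0 by simp
next
  case False
  define u where "u = b - a"
  have u: "u \<noteq> 0" and b: "b = a + u" using False by (auto simp: u_def)
  define H where "H = {w. likelihood_ratio a w \<le> likelihood_ratio b w}"
  have "a + \<xi> \<in> H \<longleftrightarrow> u \<bullet> \<xi> \<ge> (norm u)\<^sup>2 / 2" for \<xi>
    unfolding H_def mem_Collect_eq likelihood_ratio_le_iff b
    by (simp add: power2_norm_eq_inner inner_add_left inner_add_right inner_commute[of u a] field_simps)
  moreover have "b + \<xi> \<notin> H \<longleftrightarrow> u \<bullet> \<xi> < - ((norm u)\<^sup>2 / 2)" for \<xi>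
    unfolding H_def mem_Collect_eq likelihood_ratio_le_iff b
    by (simp add: power2_norm_eq_inner inner_add_left inner_add_right inner_commute[of u a] field_simps)
      linarith
  ultimately have inH: "{\<xi>. a + \<xi> \<in> H} = {\<xi>. u \<bullet> \<xi> \<ge> (norm u)\<^sup>2 / 2}"
    "{\<xi>. b + \<xi> \<notin> H} = {\<xi>. u \<bullet> \<xi> < - ((norm u)\<^sup>2 / 2)}"
    by auto
  have half: "(norm u)\<^sup>2 / 2 / norm u = norm (a - b) / 2"
    using u by (simp add: u_def power2_eq_square norm_minus_commute)
  have "2 * normal_tail (norm (a - b) / 2)
      = measure gauss_noise {\<xi>. a + \<xi> \<in> H} + measure gauss_noise {\<xi>. b + \<xi> \<notin> H}"
    unfolding inH gauss_noise_linear_tail(2,3)[OF u] half by simp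
  also have "\<dots> \<le> measure gauss_noise {\<xi>. a + \<xi> \<in> S} + measure gauss_noise {\<xi>. b + \<xi> \<notin> S}"
    unfolding H_def by (rule likelihood_ratio_test_optimal[OF S])
  finally show ?thesis .
qed

section \<open>Lower bounds on the minimax risk\<close>

lemma err_set_measurable:
  fixes A :: "real ^ 'n::finite ^ 'l::finite" and ghat :: "real ^ 'l \<Rightarrow> real"
  assumes [measurable]: "ghat \<in> borel_measurable borel"
  shows "{\<xi>. \<bar>ghat (A *v x + \<xi>) - g \<bullet> x\<bar> > \<delta>} \<in> sets borel"
  by measurable

text \<open>If a Borel estimate errs by more than \<open>\<delta>\<close> with probability below \<open>\<epsilon> = Q(q)\<close> at two signals
  whose images are at distance at most \<open>2q\<close>, then \<open>\<delta>\<close> is at least half the gap between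
  their functionals: otherwise thresholding the estimate at the midpoint would be a test
  beating the two-point bound.\<close>
lemma two_point_risk_bound:
  fixes A :: "real ^ 'n::finite ^ 'l::finite" and ghat :: "real ^ 'l \<Rightarrow> real"
  assumes gh: "ghat \<in> borel_measurable borel"
    and ex: "err_prob A g ghat x \<delta> < normal_tail q" and ey: "err_prob A g ghat y \<delta> < normal_tail q"
    and dist: "norm (A *v (x - y)) \<le> 2 * q" and ord: "g \<bullet> y \<le> g \<bullet> x"
  shows "g \<bullet> (x - y) / 2 \<le> \<delta>"
proof (rule ccontr)
  assume far: "\<not> ?thesis"
  interpret prob_space "gauss_noise :: (real ^ 'l) measure" by (rule prob_space_gauss_noise)
  define S where "S = {\<omega>. ghat \<omega> < (g \<bullet> x + g \<bullet> y) / 2}"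
  have S: "S \<in> sets borel" unfolding S_def using gh by measurable
  have "measure gauss_noise {\<xi>. A *v x + \<xi> \<in> S} \<le> err_prob A g ghat x \<delta>"
    unfolding err_prob_def using far
    by (intro finite_measure_mono err_set_measurable[OF gh, unfolded sets_gauss_noise[symmetric]])
      (auto simp: S_def inner_diff_right)
  moreover have "measure gauss_noise {\<xi>. A *v y + \<xi> \<notin> S} \<le> err_prob A g ghat y \<delta>"
    unfolding err_prob_def using far
    by (intro finite_measure_mono err_set_measurable[OF gh, unfolded sets_gauss_noise[symmetric]])
      (auto simp: S_def inner_diff_right)
  moreover have "normal_tail q \<le> normal_tail (norm (A *v x - A *v y) / 2)"
    using dist by (intro normal_tail_mono) (simp add: matrix_vector_mult_diff_distrib)
  ultimately show False
    using two_point_lower_bound[OF S, of "A *v x" "A *v y"] ex ey by linarith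
qed

lemma Risk_star_two_point:
  fixes X :: "(real ^ 'n::finite) set" and A :: "real ^ 'n ^ 'l::finite"
  assumes xy: "x \<in> X" "y \<in> X"
    and dist: "norm (A *v (x - y)) \<le> 2 * q" and q: "normal_tail q = \<epsilon>"
  shows "ereal (\<bar>g \<bullet> (x - y)\<bar> / 2) \<le> Risk_star X A g \<epsilon>"
  unfolding Risk_star_def Risk_def
proof (intro INF_greatest Inf_greatest, clarify)
  fix ghat :: "real ^ 'l \<Rightarrow> real" and \<delta>
  assume gh: "ghat \<in> borel_measurable borel"
    and sup: "(SUP x\<in>X. ereal (err_prob A g ghat x \<delta>)) < ereal \<epsilon>"
  have err: "err_prob A g ghat z \<delta> < normal_tail q" if "z \<in> X" for z
    using order.strict_trans1[OF SUP_upper[OF that] sup] q by simp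
  have dist': "norm (A *v (y - x)) \<le> 2 * q"
    using dist by (metis matrix_vector_mult_diff_distrib norm_minus_commute)
  show "ereal (\<bar>g \<bullet> (x - y)\<bar> / 2) \<le> ereal \<delta>"
  proof (cases "g \<bullet> y \<le> g \<bullet> x")
    case True
    then show ?thesis
      using two_point_risk_bound[OF gh err[OF xy(1)] err[OF xy(2)] dist] by (simp add: inner_diff_right)
  next
    case False
    then show ?thesis
      using two_point_risk_bound[OF gh err[OF xy(2)] err[OF xy(1)] dist'] by (simp add: inner_diff_right)
  qed
qed

text \<open>Rescaling: for a convex \<open>X\<close>, pairs that are only \<open>2r\<close>-close (\<open>r \<ge> q\<close>) can be shrunk
  towards their midpoint by the factor \<open>q/r\<close> to become \<open>2q\<close>-close, which costs the factor
  \<open>r/q\<close> in the bound.\<close>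
lemma Risk_star_rescaled_two_point:
  fixes X :: "(real ^ 'n::finite) set" and A :: "real ^ 'n ^ 'l::finite"
  assumes X: "convex X" and xy: "x \<in> X" "y \<in> X"
    and qr: "0 < q" "q \<le> r" and q: "normal_tail q = \<epsilon>"
    and dist: "norm (A *v (x - y)) \<le> 2 * r" and m: "Risk_star X A g \<epsilon> = ereal m"
  shows "g \<bullet> (x - y) / 2 \<le> r / q * m"
proof -
  define \<theta> where "\<theta> = q / r"
  have \<theta>: "0 < \<theta>" "\<theta> \<le> 1" using qr by (auto simp: \<theta>_def)
  define x' where "x' = ((1 + \<theta>) / 2) *\<^sub>R x + ((1 - \<theta>) / 2) *\<^sub>R y"
  define y' where "y' = ((1 - \<theta>) / 2) *\<^sub>R x + ((1 + \<theta>) / 2) *\<^sub>R y"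
  have "x' \<in> X" "y' \<in> X" unfolding x'_def y'_def
    using \<theta> by (auto intro!: convexD[OF X xy] simp: add_divide_distrib[symmetric])
  moreover have diff: "x' - y' = \<theta> *\<^sub>R (x - y)"
  proof -
    have "x' - y' = ((1 + \<theta>) / 2 - (1 - \<theta>) / 2) *\<^sub>R x - ((1 + \<theta>) / 2 - (1 - \<theta>) / 2) *\<^sub>R y"
      unfolding x'_def y'_def by (simp add: algebra_simps)
    also have "(1 + \<theta>) / 2 - (1 - \<theta>) / 2 = \<theta>" by (simp add: diff_divide_distrib[symmetric])
    finally show ?thesis by (simp add: scaleR_diff_right)
  qed
  moreover have "norm (A *v (x' - y')) \<le> 2 * q"
  proof -
    have "norm (A *v (x' - y')) = \<theta> * norm (A *v (x - y))"
      using \<theta> by (simp add: diff matrix_vector_mult_scaleR)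
    also have "\<dots> \<le> \<theta> * (2 * r)" using \<theta> dist by (intro mult_left_mono) auto
    finally show ?thesis using qr by (simp add: \<theta>_def)
  qed
  ultimately have "\<theta> * (g \<bullet> (x - y)) / 2 \<le> m"
    using Risk_star_two_point[of x' X y' A q \<epsilon> g] q m by simp
  then show ?thesis using \<theta> qr by (simp add: \<theta>_def field_simps)
qed

section \<open>Lagrangian duality\<close>

text \<open>We separate the convex sets
  \<open>S = {(Ad, g\<^sup>Td/2 - t) | d \<in> D, t \<ge> 0}\<close> and \<open>T = {(v, t) | \<parallel>v\<parallel> \<le> 2r, t > M}\<close>.\<close>
lemma lagrange_duality:
  fixes A :: "real ^ 'n::finite ^ 'l::finite" and g :: "real ^ 'n" and D :: "(real ^ 'n) set"
  assumes D: "convex D" "0 \<in> D" and r: "r > 0"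
    and bound: "\<And>d. d \<in> D \<Longrightarrow> norm (A *v d) \<le> 2 * r \<Longrightarrow> g \<bullet> d / 2 \<le> M"
  shows "\<exists>\<phi>. \<forall>d\<in>D. (g \<bullet> d - \<phi> \<bullet> (A *v d)) / 2 + r * norm \<phi> \<le> M"
proof -
  define f :: "(real ^ 'n) \<times> real \<Rightarrow> (real ^ 'l) \<times> real"
    where "f p = (A *v fst p, g \<bullet> fst p / 2 - snd p)" for p
  define S where "S = f ` (D \<times> {0..})"
  define T :: "((real ^ 'l) \<times> real) set" where "T = cball 0 (2 * r) \<times> {M<..}"
  have "linear f"
    by (intro linearI) (auto simp: f_def matrix_vector_right_distrib matrix_vector_mult_scaleR
        inner_add_right algebra_simps)
  then have S: "convex S" unfolding S_def using D(1) by (intro convex_linear_image convex_Times) auto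
  have T: "convex T" unfolding T_def by (intro convex_Times convex_cball) auto
  have S0: "(0, 0) \<in> S" unfolding S_def f_def using D(2) by force
  have Tne: "T \<noteq> {}" using r by (auto simp: T_def intro: gt_ex)
  have disj: "S \<inter> T = {}"
  proof (intro equals0I)
    fix p assume "p \<in> S \<inter> T"
    then obtain d t where "d \<in> D" "t \<ge> 0" "norm (A *v d) \<le> 2 * r" "g \<bullet> d / 2 - t > M"
      by (auto simp: S_def T_def f_def)
    then show False using bound by force
  qed
  obtain a b0 where a: "a \<noteq> 0" and aS: "\<forall>x\<in>S. inner a x \<le> b0"
    and aT: "\<forall>x\<in>T. inner a x \<ge> b0"
    using separating_hyperplane_sets[OF S T _ Tne disj] S0 by blast
  define \<psi> where "\<psi> = fst a"
  define \<beta> where "\<beta> = snd a"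
  have inn: "inner a (v, t) = \<psi> \<bullet> v + \<beta> * t" for v t by (simp add: \<psi>_def \<beta>_def inner_prod_def)
  have b0: "0 \<le> b0" using aS S0 by (auto simp: inn)
  text \<open>Testing the separation against the point of \<open>T\<close> where \<open>\<psi>\<^sup>Tv\<close> is least:\<close>
  have T_test: "b0 \<le> - 2 * r * norm \<psi> + \<beta> * (M + k)" if "k > 0" for k
  proof -
    define v where "v = (if \<psi> = 0 then 0 else - (2 * r / norm \<psi>) *\<^sub>R \<psi>)"
    have "(v, M + k) \<in> T" "\<psi> \<bullet> v = - 2 * r * norm \<psi>"
      using r that by (auto simp: v_def T_def power2_norm_eq_inner[symmetric] power2_eq_square)
    then show ?thesis using aT by (auto simp: inn)
  qed
  have \<beta>: "\<beta> > 0"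
  proof (rule ccontr)
    assume "\<not> \<beta> > 0"
    moreover have pos: "0 < M + (\<bar>M\<bar> + 1)" by linarith
    ultimately have "\<beta> * (M + (\<bar>M\<bar> + 1)) \<le> 0" by (simp add: mult_nonpos_nonneg)
    moreover have "b0 \<le> - 2 * r * norm \<psi> + \<beta> * (M + (\<bar>M\<bar> + 1))" by (rule T_test) linarith
    moreover have "0 \<le> r * norm \<psi>" using r by simp
    ultimately have "r * norm \<psi> = 0" "\<beta> * (M + (\<bar>M\<bar> + 1)) = 0" using b0 by linarith+
    then have "\<psi> = 0" "\<beta> = 0" using r pos by simp_all
    then show False using a by (simp add: \<psi>_def \<beta>_def prod_eq_iff)
  qed
  have key: "b0 \<le> - 2 * r * norm \<psi> + \<beta> * M"
  proof (rule ccontr)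
    assume gap: "\<not> ?thesis"
    define k where "k = (b0 - (- 2 * r * norm \<psi> + \<beta> * M)) / (2 * \<beta>)"
    have "k > 0" using gap \<beta> by (simp add: k_def)
    moreover have "\<beta> * k = (b0 - (- 2 * r * norm \<psi> + \<beta> * M)) / 2" using \<beta> by (simp add: k_def)
    ultimately show False using T_test[of k] gap by (simp add: algebra_simps)
  qed
  define \<phi> where "\<phi> = - (2 / \<beta>) *\<^sub>R \<psi>"
  show ?thesis
  proof (intro exI ballI)
    fix d assume "d \<in> D"
    then have "f (d, 0) \<in> S" unfolding S_def by auto
    then have "\<psi> \<bullet> (A *v d) + \<beta> * (g \<bullet> d / 2) \<le> - 2 * r * norm \<psi> + \<beta> * M"
      using aS key by (auto simp: inn f_def)
    then have "(\<psi> \<bullet> (A *v d) + \<beta> * (g \<bullet> d / 2)) / \<beta> \<le> (- 2 * r * norm \<psi> + \<beta> * M) / \<beta>"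
      using \<beta> by (intro divide_right_mono) auto
    moreover have "(g \<bullet> d - \<phi> \<bullet> (A *v d)) / 2 + r * norm \<phi>
        = (\<psi> \<bullet> (A *v d) + \<beta> * (g \<bullet> d / 2)) / \<beta> + 2 * r * norm \<psi> / \<beta>"
      using \<beta> by (simp add: \<phi>_def field_simps)
    moreover have "(- 2 * r * norm \<psi> + \<beta> * M) / \<beta> = M - 2 * r * norm \<psi> / \<beta>"
      using \<beta> by (simp add: field_simps)
    ultimately show "(g \<bullet> d - \<phi> \<bullet> (A *v d)) / 2 + r * norm \<phi> \<le> M" by linarith
  qed
qed

section \<open>Risk of affine estimates\<close>

lemma compact_midrange:
  fixes h :: "'a::topological_space \<Rightarrow> real"
  assumes "compact K" "K \<noteq> {}" "continuous_on K h"
    and osc: "\<And>x y. x \<in> K \<Longrightarrow> y \<in> K \<Longrightarrow> (h x - h y) / 2 \<le> B"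
  shows "\<exists>c. \<forall>x\<in>K. \<bar>c - h x\<bar> \<le> B"
proof -
  obtain xM where xM: "xM \<in> K" "\<And>y. y \<in> K \<Longrightarrow> h y \<le> h xM"
    using continuous_attains_sup[OF assms(1-3)] by blast
  obtain xm where xm: "xm \<in> K" "\<And>y. y \<in> K \<Longrightarrow> h xm \<le> h y"
    using continuous_attains_inf[OF assms(1-3)] by blast
  have "\<bar>(h xM + h xm) / 2 - h x\<bar> \<le> B" if "x \<in> K" for x
    using xM(2)[OF that] xm(2)[OF that] osc[OF xM(1) xm(1)]
    unfolding abs_le_iff by argo
  then show ?thesis by blast
qed

text \<open>Upper bound for an affine estimate \<open>\<phi>\<^sup>T\<omega> + c\<close>: its error is the bias \<open>c - (g - A\<^sup>T\<phi>)\<^sup>Tx\<close>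
  plus the Gaussian term \<open>\<phi>\<^sup>T\<xi>\<close>, which exceeds \<open>r\<parallel>\<phi>\<parallel>\<close> in absolute value with probability at most
  \<open>2Q(r) = \<epsilon>\<close>.\<close>
lemma affine_estimate_risk:
  fixes X :: "(real ^ 'n::finite) set" and A :: "real ^ 'n ^ 'l::finite" and \<phi> :: "real ^ 'l"
  assumes r: "normal_tail r = \<epsilon> / 2" "0 \<le> r" and \<epsilon>: "0 < \<epsilon>"
    and bias: "\<And>x. x \<in> X \<Longrightarrow> \<bar>c - (g \<bullet> x - \<phi> \<bullet> (A *v x))\<bar> \<le> M - r * norm \<phi>"
  shows "Risk X A g (\<lambda>\<omega>. \<phi> \<bullet> \<omega> + c) \<epsilon> \<le> ereal M"
proof -
  interpret prob_space "gauss_noise :: (real ^ 'l) measure" by (rule prob_space_gauss_noise)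
  have half_spaces: "{\<xi>. s < \<phi> \<bullet> \<xi>} \<in> events" "{\<xi>. \<phi> \<bullet> \<xi> < - s} \<in> events" for s
    by (simp_all add: borel_open open_Collect_less continuous_intros)
  have below: "Risk X A g (\<lambda>\<omega>. \<phi> \<bullet> \<omega> + c) \<epsilon> \<le> ereal \<delta>" if "\<delta> > M" for \<delta>
  proof -
    define s where "s = \<delta> - (M - r * norm \<phi>)"
    define p where "p = prob {\<xi>. s < \<phi> \<bullet> \<xi>} + prob {\<xi>. \<phi> \<bullet> \<xi> < - s}"
    have p: "p < \<epsilon>"
    proof (cases "\<phi> = 0")
      case True
      then show ?thesis using \<open>\<delta> > M\<close> \<epsilon> by (simp add: p_def s_def)
    next
      case False
      have "r < s / norm \<phi>" using \<open>\<delta> > M\<close> False by (simp add: s_def field_simps)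
      then have "normal_tail (s / norm \<phi>) < \<epsilon> / 2" using normal_tail_strict_mono r(1) by metis
      then show ?thesis using gauss_noise_linear_tail(1,3)[OF False, of s] by (simp add: p_def)
    qed
    have err: "err_prob A g (\<lambda>\<omega>. \<phi> \<bullet> \<omega> + c) x \<delta> \<le> p" if x: "x \<in> X" for x
    proof -
      have "{\<xi>. \<delta> < \<bar>\<phi> \<bullet> (A *v x + \<xi>) + c - g \<bullet> x\<bar>} \<subseteq> {\<xi>. s < \<phi> \<bullet> \<xi>} \<union> {\<xi>. \<phi> \<bullet> \<xi> < - s}"
      proof
        fix \<xi> assume "\<xi> \<in> {\<xi>. \<delta> < \<bar>\<phi> \<bullet> (A *v x + \<xi>) + c - g \<bullet> x\<bar>}"
        then have "\<delta> < \<bar>\<phi> \<bullet> \<xi> + (c - (g \<bullet> x - \<phi> \<bullet> (A *v x)))\<bar>"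
          by (simp add: inner_add_right algebra_simps)
        then show "\<xi> \<in> {\<xi>. s < \<phi> \<bullet> \<xi>} \<union> {\<xi>. \<phi> \<bullet> \<xi> < - s}"
          using bias[OF x] by (auto simp: s_def)
      qed
      then have "err_prob A g (\<lambda>\<omega>. \<phi> \<bullet> \<omega> + c) x \<delta> \<le> prob ({\<xi>. s < \<phi> \<bullet> \<xi>} \<union> {\<xi>. \<phi> \<bullet> \<xi> < - s})"
        unfolding err_prob_def using half_spaces by (intro finite_measure_mono) auto
      also have "\<dots> \<le> p" unfolding p_def using half_spaces by (intro measure_Un_le) auto
      finally show ?thesis .
    qed
    have "(SUP x\<in>X. ereal (err_prob A g (\<lambda>\<omega>. \<phi> \<bullet> \<omega> + c) x \<delta>)) \<le> ereal p"
      using err by (intro SUP_least) simp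
    also have "\<dots> < ereal \<epsilon>" using p by simp
    finally show ?thesis unfolding Risk_def by (intro Inf_lower imageI CollectI)
  qed
  show ?thesis
  proof (rule ccontr)
    assume "\<not> ?thesis"
    then obtain z where "ereal M < ereal z" "ereal z < Risk X A g (\<lambda>\<omega>. \<phi> \<bullet> \<omega> + c) \<epsilon>"
      using ereal_dense2 not_le by metis
    then show False using below[of z] by simp
  qed
qed

lemma ErfInv_quantiles:
  assumes "0 < \<epsilon>" "\<epsilon> < 1/2"
  shows "normal_tail (ErfInv \<epsilon>) = \<epsilon>" "normal_tail (ErfInv (\<epsilon> / 2)) = \<epsilon> / 2"
    and "0 < ErfInv \<epsilon>" "ErfInv \<epsilon> < ErfInv (\<epsilon> / 2)"
proof -
  show q: "normal_tail (ErfInv \<epsilon>) = \<epsilon>" and r: "normal_tail (ErfInv (\<epsilon> / 2)) = \<epsilon> / 2"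
    using assms by (simp_all add: normal_tail_ErfInv)
  show "0 < ErfInv \<epsilon>"
    using normal_tail_mono[of "ErfInv \<epsilon>" 0] q normal_tail_0 assms by fastforce
  show "ErfInv \<epsilon> < ErfInv (\<epsilon> / 2)"
    using normal_tail_mono[of "ErfInv (\<epsilon> / 2)" "ErfInv \<epsilon>"] q r assms by fastforce
qed

text \<open>By the rescaled two-point bound,
  \<open>g\<^sup>Td/2 \<le> (r/q) m\<close> for every difference \<open>d\<close> of points of \<open>X\<close> with \<open>\<parallel>Ad\<parallel> \<le> 2r\<close>; duality turns this
  into a multiplier \<open>\<phi>\<close>, and centering the bias over the compact \<open>X\<close> gives the constant \<open>c\<close>.\<close>
lemma affine_estimate_near_minimax:
  fixes X :: "(real ^ 'n::finite) set" and A :: "real ^ 'n ^ 'l::finite"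
  assumes X: "X \<noteq> {}" "convex X" "compact X"
    and qr: "0 < q" "q \<le> r" and \<epsilon>: "0 < \<epsilon>"
    and q: "normal_tail q = \<epsilon>" and r: "normal_tail r = \<epsilon> / 2"
    and m: "Risk_star X A g \<epsilon> = ereal m"
  shows "\<exists>(\<phi> :: real ^ 'l) c. Risk X A g (\<lambda>\<omega>. \<phi> \<bullet> \<omega> + c) \<epsilon> \<le> ereal (r / q * m)"
proof -
  define D where "D = (\<Union>x\<in>X. \<Union>y\<in>X. {x - y})"
  have "convex D" unfolding D_def by (rule convex_differences[OF X(2) X(2)])
  moreover have "0 \<in> D" unfolding D_def using X(1) by force
  moreover have "g \<bullet> d / 2 \<le> r / q * m" if "d \<in> D" "norm (A *v d) \<le> 2 * r" for d
    using that Risk_star_rescaled_two_point[OF X(2) _ _ qr q _ m] by (auto simp: D_def)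
  ultimately obtain \<phi> where \<phi>: "\<And>d. d \<in> D \<Longrightarrow> (g \<bullet> d - \<phi> \<bullet> (A *v d)) / 2 + r * norm \<phi> \<le> r / q * m"
    using lagrange_duality[of D r A g "r / q * m"] qr by auto
  define h where "h x = g \<bullet> x - \<phi> \<bullet> (A *v x)" for x
  have "(h x - h y) / 2 \<le> r / q * m - r * norm \<phi>" if "x \<in> X" "y \<in> X" for x y
  proof -
    have "x - y \<in> D" using that unfolding D_def by blast
    then have "(g \<bullet> (x - y) - \<phi> \<bullet> (A *v (x - y))) / 2 + r * norm \<phi> \<le> r / q * m" by (rule \<phi>)
    moreover have "h x - h y = g \<bullet> (x - y) - \<phi> \<bullet> (A *v (x - y))"
      by (simp add: h_def matrix_vector_mult_diff_distrib inner_diff_right)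
    ultimately show ?thesis by argo
  qed
  moreover have "continuous_on X h" unfolding h_def by (intro continuous_intros)
  ultimately obtain c where "\<And>x. x \<in> X \<Longrightarrow> \<bar>c - h x\<bar> \<le> r / q * m - r * norm \<phi>"
    using compact_midrange[OF X(3) X(1)] by metis
  then have "Risk X A g (\<lambda>\<omega>. \<phi> \<bullet> \<omega> + c) \<epsilon> \<le> ereal (r / q * m)"
    using qr by (intro affine_estimate_risk[OF r _ \<epsilon>]) (auto simp: h_def)
  then show ?thesis by blast
qed

text \<open>If the minimax risk is infinite there is nothing to prove (it is nonnegative); otherwise
  the previous lemma applies with \<open>q = ErfInv \<epsilon>\<close> and \<open>r = ErfInv (\<epsilon>/2)\<close>.\<close>
theorem proposition4p2:
  fixes X :: "(real ^ 'n) set" and A :: "real ^ 'n ^ 'l" and g :: "real ^ 'n"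
    and \<epsilon> :: real
  assumes "X \<noteq> {}" and "convex X" and "compact X"
    and "0 < \<epsilon>" and "\<epsilon> < 1/2"
  shows "\<exists>(\<phi> :: real ^ 'l) (c :: real).
           Risk X A g (\<lambda>\<omega>. \<phi> \<bullet> \<omega> + c) \<epsilon>
             \<le> ereal (ErfInv (\<epsilon> / 2) / ErfInv \<epsilon>) * Risk_star X A g \<epsilon>"
proof -
  note quantiles = ErfInv_quantiles[OF assms(4,5)]
  obtain x0 where "x0 \<in> X" using assms(1) by blast
  then have nonneg: "0 \<le> Risk_star X A g \<epsilon>"
    using Risk_star_two_point[of x0 X x0 A "ErfInv \<epsilon>" \<epsilon> g] quantiles by (simp add: zero_ereal_def)
  show ?thesis
  proof (cases "Risk_star X A g \<epsilon>")
    case (real m)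
    then show ?thesis
      using affine_estimate_near_minimax[OF assms(1-3) _ _ assms(4) quantiles(1,2)] quantiles
      by (simp add: less_imp_le)
  next
    case PInf
    then show ?thesis using quantiles by simp
  qed (use nonneg in simp)
qed

end
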